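(* Let $d_\mu,d_\lambda\ge 2$ be integers with $d_\mu<d_\lambda$, and let $a\in(0,1)$. Let $|\mu\rangle,|\bar\mu\rangle\in\mathbb{C}^{d_\mu}\otimes\mathbb{C}^{d_\mu}$ and $|\lambda\rangle,|\bar\lambda\rangle\in\mathbb{C}^{d_\lambda}\otimes\mathbb{C}^{d_\lambda}$ be states whose squared Schmidt coefficients are the normalizations of the following tuples: $$\mu\propto(1,a^{d_\lambda},a^{2d_\lambda},\dots,a^{(d_\mu-1)d_\lambda}),\quad \lambda\propto(1,a,a^2,\dots,a^{d_\lambda-1}),$$ $$\bar\mu\propto(1,a,a^2,\dots,a^{d_\mu-1}),\quad \bar\lambda\propto(1,a^{d_\mu},a^{2d_\mu},\dots,a^{(d_\lambda-1)d_\mu}).$$ Then $|\mu\rangle\otimes|\lambda\rangle$ can be transformed into $|\bar\mu\rangle\otimes|\bar\lambda\rangle$ by a local unitary, and this transformation is non-trivial: $|\bar\mu\rangle$ is not equal to $|\mu\rangle$ up to local unitaries.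
   Context: The state $|\mu\rangle\otimes|\lambda\rangle$ is regarded as a bipartite state between two parties, each holding a $d_\mu$-dimensional and a $d_\lambda$-dimensional subsystem. A local unitary is $U_A\otimes U_B$ with $U_A,U_B\in\mathrm{U}(d_\mu d_\lambda)$. *)

theory Defs
  imports Complex_Main "Jordan_Normal_Form.Matrix"
begin

text \<open>A pure bipartite state psi in C^m (x) C^n is represented by its coefficient matrix
  M (m x n), psi = sum_{i,j} M(i,j) |i>|j>.  A local unitary U (x) V acts as
  M |-> U * M * V^T.\<close>

definition adj_mat :: "complex mat \<Rightarrow> complex mat" where
  "adj_mat A = mat (dim_col A) (dim_row A) (\<lambda>(i,j). cnj (A $$ (j,i)))"

definition unitary_mat :: "nat \<Rightarrow> complex mat \<Rightarrow> bool" where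
  "unitary_mat n U \<longleftrightarrow> U \<in> carrier_mat n n \<and> U * adj_mat U = 1\<^sub>m n \<and> adj_mat U * U = 1\<^sub>m n"

text \<open>Kronecker product; the index (i,k) of the composite system corresponds to i * dim + k.\<close>
definition kron_mat :: "complex mat \<Rightarrow> complex mat \<Rightarrow> complex mat" where
  "kron_mat A B = mat (dim_row A * dim_row B) (dim_col A * dim_col B)
     (\<lambda>(i,j). A $$ (i div dim_row B, j div dim_col B) * B $$ (i mod dim_row B, j mod dim_col B))"

definition LU_equiv :: "nat \<Rightarrow> nat \<Rightarrow> complex mat \<Rightarrow> complex mat \<Rightarrow> bool" where
  "LU_equiv m n M N \<longleftrightarrow> (\<exists>U V. unitary_mat m U \<and> unitary_mat n V \<and> U * M * transpose_mat V = N)"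

text \<open>M in C^d (x) C^d has squared Schmidt coefficients p 0, ..., p (d-1):
  M = sum_i sqrt(p i) e_i (x) f_i with orthonormal bases (e_i), (f_i).\<close>
definition has_sq_schmidt :: "nat \<Rightarrow> complex mat \<Rightarrow> (nat \<Rightarrow> real) \<Rightarrow> bool" where
  "has_sq_schmidt d M p \<longleftrightarrow> M \<in> carrier_mat d d \<and>
     (\<exists>U V. unitary_mat d U \<and> unitary_mat d V \<and>
        M = U * mat_diag d (\<lambda>i. complex_of_real (sqrt (p i))) * transpose_mat V)"

definition normalized :: "nat \<Rightarrow> (nat \<Rightarrow> real) \<Rightarrow> nat \<Rightarrow> real" where
  "normalized d t i = t i / (\<Sum>j<d. t j)"

end

theory Submission
  imports Defs
begin

(* Write Z for the sum of a^k over k < dmu * dla. Under the index k = i * dla + j of the composite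
   system, the squared Schmidt coefficients of mu (x) lambda are a^k / Z, and those of
   mubar (x) lambdabar are a^(i + j * dmu) / Z. Since (i, j) |-> i + j * dmu is another bijection
   onto {..< dmu * dla}, the two tuples agree up to a permutation, which a permutation matrix
   realises as a local unitary. Conversely, a local unitary U (x) V maps M M^H to U M M^H U^H, so the
   squared Schmidt coefficients (the eigenvalues of M M^H) are an invariant. The largest coefficient
   of mu, namely 1 / sum_i a^(i * dla), exceeds every coefficient a^k / sum_i a^i of mubar. *)

lemma div_mod_less_mult:
  fixes k m n :: nat
  assumes "k < m * n"
  shows "k div n < m" "k mod n < n"
  using assms by (auto simp: less_mult_imp_div_less intro!: mod_less_divisor Nat.gr0I)

lemma mult_index_less:
  fixes i j m n :: nat
  assumes "i < m" "j < n"
  shows "i * n + j < m * n"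
proof -
  have "i * n + j < Suc i * n" using assms(2) by simp
  also have "\<dots> \<le> m * n" using assms(1) by (intro mult_le_mono1) simp
  finally show ?thesis .
qed

lemma div_mod_inj:
  fixes i j n :: nat
  shows "i div n = j div n \<Longrightarrow> i mod n = j mod n \<Longrightarrow> i = j"
  by (metis div_mult_mod_eq)

lemma sum_lessThan_mult_div_mod:
  fixes m n :: nat
  shows "(\<Sum>k<m * n. f (k div n) (k mod n)) = (\<Sum>i<m. \<Sum>j<n. f i j)"
proof -
  have "(\<Sum>k<m * n. f (k div n) (k mod n)) = (\<Sum>(i, j)\<in>{..<m} \<times> {..<n}. f i j)"
    by (rule sum.reindex_bij_witness[of _ "\<lambda>(i, j). i * n + j" "\<lambda>k. (k div n, k mod n)"])
      (auto simp: div_mod_less_mult mult_index_less)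
  then show ?thesis by (simp add: sum.cartesian_product)
qed

lemma bij_betw_swap_div_mod:
  fixes m n :: nat
  shows "bij_betw (\<lambda>k. k div n + k mod n * m) {..<m * n} {..<m * n}"
proof (rule bij_betw_byWitness[where f' = "\<lambda>l. l mod m * n + l div m"])
  have swap: "(k div n + k mod n * m) mod m * n + (k div n + k mod n * m) div m = k"
    "k div n + k mod n * m < m * n" if "k < m * n" for k
    using div_mod_less_mult[OF that] mult_index_less[of "k mod n" n "k div n" m]
    by (simp_all add: mult.commute)
  have unswap: "(l mod m * n + l div m) div n + (l mod m * n + l div m) mod n * m = l"
    "l mod m * n + l div m < m * n" if "l < m * n" for l
    using div_mod_less_mult[of l n m] mult_index_less[of "l mod m" m "l div m" n] that
    by (simp_all add: mult.commute)
  show "\<forall>k\<in>{..<m * n}. (k div n + k mod n * m) mod m * n + (k div n + k mod n * m) div m = k"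
    "\<forall>l\<in>{..<m * n}. (l mod m * n + l div m) div n + (l mod m * n + l div m) mod n * m = l"
    "(\<lambda>k. k div n + k mod n * m) ` {..<m * n} \<subseteq> {..<m * n}"
    "(\<lambda>l. l mod m * n + l div m) ` {..<m * n} \<subseteq> {..<m * n}"
    using swap unswap by auto
qed

lemma adj_mat_dims [simp]:
  "dim_row (adj_mat A) = dim_col A" "dim_col (adj_mat A) = dim_row A"
  by (simp_all add: adj_mat_def)

lemma adj_mat_carrier: "A \<in> carrier_mat n m \<Longrightarrow> adj_mat A \<in> carrier_mat m n"
  by auto

lemma index_adj_mat [simp]:
  "i < dim_col A \<Longrightarrow> j < dim_row A \<Longrightarrow> adj_mat A $$ (i, j) = cnj (A $$ (j, i))"
  by (simp add: adj_mat_def)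

lemma adj_mat_adj [simp]: "adj_mat (adj_mat A) = A"
  by (rule eq_matI) auto

lemma adj_mat_mult:
  "A \<in> carrier_mat n k \<Longrightarrow> B \<in> carrier_mat k m \<Longrightarrow> adj_mat (A * B) = adj_mat B * adj_mat A"
  by (rule eq_matI) (auto simp: scalar_prod_def mult.commute)

lemma adj_mat_transpose: "adj_mat (transpose_mat A) = transpose_mat (adj_mat A)"
  by (rule eq_matI) auto

lemma adj_mat_diag: "adj_mat (mat_diag n f) = mat_diag n (\<lambda>i. cnj (f i))"
  by (rule eq_matI) (auto simp: mat_diag_def)

lemma unitary_matD:
  assumes "unitary_mat n U"
  shows "U \<in> carrier_mat n n" "adj_mat U \<in> carrier_mat n n"
    "U * adj_mat U = 1\<^sub>m n" "adj_mat U * U = 1\<^sub>m n"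
  using assms adj_mat_carrier by (auto simp: unitary_mat_def)

lemma unitary_mat_adj: "unitary_mat n U \<Longrightarrow> unitary_mat n (adj_mat U)"
  by (auto simp: unitary_mat_def adj_mat_carrier)

lemma unitary_mat_cancel:
  assumes "unitary_mat n U" "A \<in> carrier_mat n n"
  shows "U * (adj_mat U * A) = A" "adj_mat U * (U * A) = A"
  using unitary_matD[OF assms(1)] assms(2)
  by (simp_all flip: assoc_mult_mat[of _ n n _ n _ n])

lemma unitary_mat_mult:
  assumes "unitary_mat n A" "unitary_mat n B"
  shows "unitary_mat n (A * B)"
  using unitary_matD[OF assms(1)] unitary_matD[OF assms(2)]
  by (simp add: unitary_mat_def adj_mat_mult[of _ n n] assoc_mult_mat[of _ n n _ n _ n]
      unitary_mat_cancel[OF assms(1)] unitary_mat_cancel[OF assms(2)])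

lemma unitary_mat_transpose:
  assumes "unitary_mat n U"
  shows "unitary_mat n (transpose_mat U)"
proof -
  note U = unitary_matD[OF assms]
  have "transpose_mat U * adj_mat (transpose_mat U) = transpose_mat (adj_mat U * U)"
    "adj_mat (transpose_mat U) * transpose_mat U = transpose_mat (U * adj_mat U)"
    using U(1,2) by (simp_all add: adj_mat_transpose transpose_mult[of _ n n])
  with U show ?thesis
    by (simp only: unitary_mat_def transpose_one transpose_carrier_mat)
qed

lemma kron_mat_dims [simp]:
  "dim_row (kron_mat A B) = dim_row A * dim_row B"
  "dim_col (kron_mat A B) = dim_col A * dim_col B"
  by (simp_all add: kron_mat_def)

lemma kron_mat_carrier:
  "A \<in> carrier_mat n1 m1 \<Longrightarrow> B \<in> carrier_mat n2 m2 \<Longrightarrow>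
   kron_mat A B \<in> carrier_mat (n1 * n2) (m1 * m2)"
  by auto

lemma index_kron_mat [simp]:
  "i < dim_row A * dim_row B \<Longrightarrow> j < dim_col A * dim_col B \<Longrightarrow>
   kron_mat A B $$ (i, j) = A $$ (i div dim_row B, j div dim_col B) * B $$ (i mod dim_row B, j mod dim_col B)"
  by (simp add: kron_mat_def)

lemma kron_mat_mult:
  assumes A: "A \<in> carrier_mat n1 k1" and B: "B \<in> carrier_mat k1 m1"
    and C: "C \<in> carrier_mat n2 k2" and D: "D \<in> carrier_mat k2 m2"
  shows "kron_mat (A * B) (C * D) = kron_mat A C * kron_mat B D"
proof (rule eq_matI)
  fix i j
  assume "i < dim_row (kron_mat A C * kron_mat B D)" "j < dim_col (kron_mat A C * kron_mat B D)"
  then have i: "i < n1 * n2" and j: "j < m1 * m2"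
    using A B C D by auto
  have "(kron_mat A C * kron_mat B D) $$ (i, j) =
      (\<Sum>k<k1 * k2. A $$ (i div n2, k div k2) * C $$ (i mod n2, k mod k2) *
        (B $$ (k div k2, j div m2) * D $$ (k mod k2, j mod m2)))"
    using i j A B C D by (auto simp: scalar_prod_def lessThan_atLeast0 div_mod_less_mult intro!: sum.cong)
  also have "\<dots> = (\<Sum>a<k1. \<Sum>c<k2. A $$ (i div n2, a) * C $$ (i mod n2, c) *
      (B $$ (a, j div m2) * D $$ (c, j mod m2)))"
    by (rule sum_lessThan_mult_div_mod)
  also have "\<dots> = (\<Sum>a<k1. A $$ (i div n2, a) * B $$ (a, j div m2)) *
      (\<Sum>c<k2. C $$ (i mod n2, c) * D $$ (c, j mod m2))"
    by (simp add: sum_product mult_ac)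
  also have "\<dots> = kron_mat (A * B) (C * D) $$ (i, j)"
    using i j A B C D by (simp add: scalar_prod_def lessThan_atLeast0 div_mod_less_mult)
  finally show "kron_mat (A * B) (C * D) $$ (i, j) = (kron_mat A C * kron_mat B D) $$ (i, j)" ..
qed (use A B C D in auto)

lemma kron_mat_transpose: "transpose_mat (kron_mat A B) = kron_mat (transpose_mat A) (transpose_mat B)"
  by (rule eq_matI) (auto simp: div_mod_less_mult)

lemma kron_mat_adj: "adj_mat (kron_mat A B) = kron_mat (adj_mat A) (adj_mat B)"
  by (rule eq_matI) (auto simp: div_mod_less_mult)

lemma kron_mat_diag:
  "kron_mat (mat_diag m f) (mat_diag n g) = mat_diag (m * n) (\<lambda>k. f (k div n) * g (k mod n))"
  by (rule eq_matI) (auto simp: mat_diag_def div_mod_less_mult dest: div_mod_inj)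

lemma kron_mat_one: "kron_mat (1\<^sub>m m) (1\<^sub>m n) = 1\<^sub>m (m * n)"
  using kron_mat_diag[of m "\<lambda>_. 1" n "\<lambda>_. 1"] by simp

lemma unitary_mat_kron:
  assumes "unitary_mat m U" "unitary_mat n V"
  shows "unitary_mat (m * n) (kron_mat U V)"
proof -
  note U = unitary_matD[OF assms(1)] and V = unitary_matD[OF assms(2)]
  have "kron_mat U V * adj_mat (kron_mat U V) = kron_mat (U * adj_mat U) (V * adj_mat V)"
    "adj_mat (kron_mat U V) * kron_mat U V = kron_mat (adj_mat U * U) (adj_mat V * V)"
    using U(1,2) V(1,2) by (simp_all add: kron_mat_adj kron_mat_mult[of _ m m _ m _ n n _ n])
  with U V show ?thesis
    by (simp add: unitary_mat_def kron_mat_carrier kron_mat_one)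
qed

lemma sum_delta_mult:
  fixes g :: "nat \<Rightarrow> 'a::semiring_1"
  assumes "a < n"
  shows "(\<Sum>k<n. (if k = a then 1 else 0) * g k) = g a"
proof -
  have "(\<Sum>k<n. (if k = a then 1 else 0) * g k) = (\<Sum>k<n. if k = a then g k else 0)"
    by (rule sum.cong) simp_all
  with assms show ?thesis
    by (simp add: sum.delta)
qed

definition perm_mat :: "nat \<Rightarrow> (nat \<Rightarrow> nat) \<Rightarrow> complex mat" where
  "perm_mat n \<sigma> = mat n n (\<lambda>(i, j). if j = \<sigma> i then 1 else 0)"

lemma perm_mat_dims [simp]: "dim_row (perm_mat n \<sigma>) = n" "dim_col (perm_mat n \<sigma>) = n"
  by (simp_all add: perm_mat_def)

lemma perm_mat_carrier: "perm_mat n \<sigma> \<in> carrier_mat n n"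
  by (simp add: perm_mat_def)

lemma index_perm_mat [simp]:
  "i < n \<Longrightarrow> j < n \<Longrightarrow> perm_mat n \<sigma> $$ (i, j) = (if j = \<sigma> i then 1 else 0)"
  by (simp add: perm_mat_def)

lemma adj_perm_mat: "adj_mat (perm_mat n \<sigma>) = transpose_mat (perm_mat n \<sigma>)"
  by (rule eq_matI) (auto simp: perm_mat_def)

lemma unitary_perm_mat:
  assumes \<sigma>: "bij_betw \<sigma> {..<n} {..<n}"
  shows "unitary_mat n (perm_mat n \<sigma>)"
proof -
  let ?P = "perm_mat n \<sigma>"
  have \<sigma>_less: "\<sigma> i < n" if "i < n" for i
    using bij_betwE[OF \<sigma>] that by blast
  have \<sigma>_inj: "\<sigma> i = \<sigma> j \<longleftrightarrow> i = j" if "i < n" "j < n" for i j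
    using inj_on_eq_iff[OF bij_betw_imp_inj_on[OF \<sigma>]] that by simp
  have "?P * adj_mat ?P = 1\<^sub>m n"
  proof (rule eq_matI)
    fix i j assume "i < dim_row (1\<^sub>m n)" "j < dim_col (1\<^sub>m n)"
    then have i: "i < n" and j: "j < n" by auto
    have "(?P * adj_mat ?P) $$ (i, j) =
        (\<Sum>k<n. (if k = \<sigma> i then 1 else 0) * (if k = \<sigma> j then 1 else 0))"
      using i j by (simp add: adj_perm_mat scalar_prod_def lessThan_atLeast0)
    then show "(?P * adj_mat ?P) $$ (i, j) = 1\<^sub>m n $$ (i, j)"
      using i j \<sigma>_less \<sigma>_inj by (simp add: sum_delta_mult)
  qed auto
  moreover have "adj_mat ?P * ?P = 1\<^sub>m n"
  proof (rule eq_matI)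
    fix i j assume "i < dim_row (1\<^sub>m n)" "j < dim_col (1\<^sub>m n)"
    then have i: "i < n" and j: "j < n" by auto
    let ?\<delta> = "\<lambda>l. (if l = i then 1 else 0) * (if l = j then 1 else 0) :: complex"
    have "(adj_mat ?P * ?P) $$ (i, j) = (\<Sum>k<n. ?\<delta> (\<sigma> k))"
      using i j by (simp add: adj_perm_mat scalar_prod_def lessThan_atLeast0, intro sum.cong) auto
    also have "\<dots> = (\<Sum>l<n. ?\<delta> l)"
      by (rule sum.reindex_bij_betw[OF \<sigma>])
    finally show "(adj_mat ?P * ?P) $$ (i, j) = 1\<^sub>m n $$ (i, j)"
      using i j by (simp add: sum_delta_mult)
  qed auto
  ultimately show ?thesis
    by (simp add: unitary_mat_def perm_mat_carrier)
qed

lemma perm_mat_conj_diag: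
  assumes \<sigma>: "bij_betw \<sigma> {..<n} {..<n}"
  shows "perm_mat n \<sigma> * mat_diag n f * transpose_mat (perm_mat n \<sigma>) = mat_diag n (\<lambda>k. f (\<sigma> k))"
proof (rule eq_matI)
  let ?P = "perm_mat n \<sigma>"
  fix i j assume "i < dim_row (mat_diag n (\<lambda>k. f (\<sigma> k)))" "j < dim_col (mat_diag n (\<lambda>k. f (\<sigma> k)))"
  then have i: "i < n" and j: "j < n" by (simp_all add: mat_diag_def)
  have \<sigma>_i: "\<sigma> i < n"
    using bij_betwE[OF \<sigma>] i by blast
  have \<sigma>_inj: "\<sigma> i = \<sigma> j \<longleftrightarrow> i = j"
    using inj_on_eq_iff[OF bij_betw_imp_inj_on[OF \<sigma>]] i j by simp
  have "?P * mat_diag n f = mat n n (\<lambda>(i, j). ?P $$ (i, j) * f j)"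
    by (rule mat_diag_mult_right[OF perm_mat_carrier])
  then have "(?P * mat_diag n f * transpose_mat ?P) $$ (i, j) =
      (\<Sum>k<n. (if k = \<sigma> i then 1 else 0) * (f k * (if k = \<sigma> j then 1 else 0)))"
    using i j by (simp add: scalar_prod_def lessThan_atLeast0 mult.assoc)
  also have "\<dots> = f (\<sigma> i) * (if \<sigma> i = \<sigma> j then 1 else 0)"
    using \<sigma>_i by (rule sum_delta_mult)
  also have "\<dots> = mat_diag n (\<lambda>k. f (\<sigma> k)) $$ (i, j)"
    using i j \<sigma>_inj by (simp add: mat_diag_def)
  finally show "(?P * mat_diag n f * transpose_mat ?P) $$ (i, j) =
      mat_diag n (\<lambda>k. f (\<sigma> k)) $$ (i, j)" .
qed (simp_all add: mat_diag_def)

lemma LU_equiv_sym: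
  assumes M: "M \<in> carrier_mat n n" and "LU_equiv n n M N"
  shows "LU_equiv n n N M"
proof -
  obtain U V where U: "unitary_mat n U" and V: "unitary_mat n V" and N: "U * M * transpose_mat V = N"
    using assms(2) unfolding LU_equiv_def by blast
  have W: "unitary_mat n (transpose_mat V)"
    using unitary_mat_transpose[OF V] .
  note Uc = unitary_matD[OF U] and Wc = unitary_matD[OF W]
  have "adj_mat U * N * transpose_mat (adj_mat V) =
      adj_mat U * (U * (M * (transpose_mat V * adj_mat (transpose_mat V))))"
    unfolding N[symmetric] using M Uc(1,2) Wc(1,2)
    by (simp add: adj_mat_transpose assoc_mult_mat[of _ n n _ n _ n])
  also have "\<dots> = M"
    using M Wc by (simp add: unitary_mat_cancel[OF U])
  finally show ?thesis
    unfolding LU_equiv_def using unitary_mat_adj[OF U] unitary_mat_adj[OF V] by blast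
qed

lemma LU_equiv_trans:
  assumes M: "M \<in> carrier_mat n n" and "LU_equiv n n M N" and "LU_equiv n n N K"
  shows "LU_equiv n n M K"
proof -
  obtain U V where U: "unitary_mat n U" and V: "unitary_mat n V" and N: "U * M * transpose_mat V = N"
    using assms(2) unfolding LU_equiv_def by blast
  obtain U' V' where U': "unitary_mat n U'" and V': "unitary_mat n V'" and K: "U' * N * transpose_mat V' = K"
    using assms(3) unfolding LU_equiv_def by blast
  note c = unitary_matD(1)[OF U] unitary_matD(1)[OF V] unitary_matD(1)[OF U'] unitary_matD(1)[OF V']
  have "(U' * U) * M * transpose_mat (V' * V) = K"
    unfolding K[symmetric] N[symmetric] using M c
    by (simp add: transpose_mult[of _ n n] assoc_mult_mat[of _ n n _ n _ n])
  then show ?thesis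
    unfolding LU_equiv_def using unitary_mat_mult[OF U' U] unitary_mat_mult[OF V' V] by blast
qed

lemma LU_equiv_perm_diag:
  assumes "bij_betw \<sigma> {..<n} {..<n}"
  shows "LU_equiv n n (mat_diag n f) (mat_diag n (\<lambda>k. f (\<sigma> k)))"
  unfolding LU_equiv_def using unitary_perm_mat[OF assms] perm_mat_conj_diag[OF assms] by blast

lemma LU_equiv_gram:
  assumes M: "M \<in> carrier_mat n n" and "LU_equiv n n M N"
  shows "\<exists>X. unitary_mat n X \<and> N * adj_mat N = X * (M * adj_mat M) * adj_mat X"
proof -
  obtain U V where U: "unitary_mat n U" and V: "unitary_mat n V" and N: "U * M * transpose_mat V = N"
    using assms(2) unfolding LU_equiv_def by blast
  have W: "unitary_mat n (transpose_mat V)"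
    using unitary_mat_transpose[OF V] .
  note Uc = unitary_matD[OF U] and Wc = unitary_matD[OF W]
  have "N * adj_mat N = U * (M * (transpose_mat V * (adj_mat (transpose_mat V) * (adj_mat M * adj_mat U))))"
    unfolding N[symmetric] using M adj_mat_carrier[OF M] Uc(1,2) Wc(1,2)
    by (simp add: adj_mat_mult[of _ n n _ n] assoc_mult_mat[of _ n n _ n _ n])
  also have "\<dots> = U * (M * adj_mat M) * adj_mat U"
    using M adj_mat_carrier[OF M] Uc(1,2)
    by (simp add: unitary_mat_cancel[OF W] assoc_mult_mat[of _ n n _ n _ n])
  finally show ?thesis
    using U by blast
qed

lemma unitary_similar_diag_entry:
  assumes X: "unitary_mat n X" and D: "mat_diag n g = X * mat_diag n f * adj_mat X" and i: "i < n"
  shows "\<exists>k<n. g k = f i"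
proof -
  note Xc = unitary_matD[OF X]
  have comm: "mat_diag n g * X = X * mat_diag n f"
    unfolding D using Xc by (simp add: assoc_mult_mat[of _ n n _ n _ n] mult_carrier_mat[of _ n n _ n]
        right_mult_one_mat[OF mat_diag_dim])
  have "\<exists>k<n. X $$ (k, i) \<noteq> 0"
  proof (rule ccontr)
    assume "\<not> (\<exists>k<n. X $$ (k, i) \<noteq> 0)"
    then have "(adj_mat X * X) $$ (i, i) = 0"
      using Xc(1) i by (simp add: scalar_prod_def)
    with Xc(4) i show False
      by simp
  qed
  then obtain k where k: "k < n" "X $$ (k, i) \<noteq> 0"
    by blast
  have "g k * X $$ (k, i) = (mat_diag n g * X) $$ (k, i)"
    using Xc(1) k i by (simp add: mat_diag_mult_left)
  also have "\<dots> = X $$ (k, i) * f i"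
    using Xc(1) k i by (simp add: comm mat_diag_mult_right)
  finally show ?thesis
    using k by auto
qed

abbreviation schmidt_diag :: "nat \<Rightarrow> (nat \<Rightarrow> real) \<Rightarrow> complex mat" where
  "schmidt_diag n p \<equiv> mat_diag n (\<lambda>i. complex_of_real (sqrt (p i)))"

lemma schmidt_diag_gram:
  assumes "\<forall>i<n. 0 \<le> p i"
  shows "schmidt_diag n p * adj_mat (schmidt_diag n p) = mat_diag n (\<lambda>i. complex_of_real (p i))"
  unfolding adj_mat_diag mat_diag_diag
  using assms by (auto simp: mat_diag_def simp flip: of_real_mult intro!: eq_matI)

lemma has_sq_schmidt_carrier: "has_sq_schmidt n M p \<Longrightarrow> M \<in> carrier_mat n n"
  by (simp add: has_sq_schmidt_def)

lemma has_sq_schmidt_LU_equiv_diag: "has_sq_schmidt n M p \<Longrightarrow> LU_equiv n n (schmidt_diag n p) M"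
  unfolding has_sq_schmidt_def LU_equiv_def by metis

lemma has_sq_schmidt_kron:
  assumes "has_sq_schmidt m M p" and "has_sq_schmidt n N q"
  shows "has_sq_schmidt (m * n) (kron_mat M N) (\<lambda>k. p (k div n) * q (k mod n))"
proof -
  obtain U V where U: "unitary_mat m U" and V: "unitary_mat m V"
    and M: "M = U * schmidt_diag m p * transpose_mat V"
    using assms(1) unfolding has_sq_schmidt_def by blast
  obtain U' V' where U': "unitary_mat n U'" and V': "unitary_mat n V'"
    and N: "N = U' * schmidt_diag n q * transpose_mat V'"
    using assms(2) unfolding has_sq_schmidt_def by blast
  note c = unitary_matD(1)[OF U] unitary_matD(1)[OF V] unitary_matD(1)[OF U'] unitary_matD(1)[OF V']
  have "kron_mat M N =
      kron_mat U U' * kron_mat (schmidt_diag m p) (schmidt_diag n q) * transpose_mat (kron_mat V V')"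
    unfolding M N using c
    by (simp add: kron_mat_mult[of _ m m _ m _ n n _ n] kron_mat_transpose)
  also have "kron_mat (schmidt_diag m p) (schmidt_diag n q) =
      schmidt_diag (m * n) (\<lambda>k. p (k div n) * q (k mod n))"
    by (simp add: kron_mat_diag real_sqrt_mult)
  finally show ?thesis
    unfolding has_sq_schmidt_def
    using unitary_mat_kron[OF U U'] unitary_mat_kron[OF V V']
      kron_mat_carrier[OF has_sq_schmidt_carrier[OF assms(1)] has_sq_schmidt_carrier[OF assms(2)]]
    by blast
qed

lemma has_sq_schmidt_LU_equiv_perm:
  assumes M: "has_sq_schmidt n M p" and N: "has_sq_schmidt n N (\<lambda>k. p (\<sigma> k))"
    and \<sigma>: "bij_betw \<sigma> {..<n} {..<n}"
  shows "LU_equiv n n M N"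
proof -
  have "LU_equiv n n M (schmidt_diag n p)"
    by (rule LU_equiv_sym[OF mat_diag_dim has_sq_schmidt_LU_equiv_diag[OF M]])
  moreover have "LU_equiv n n (schmidt_diag n p) (schmidt_diag n (\<lambda>k. p (\<sigma> k)))"
    by (rule LU_equiv_perm_diag[OF \<sigma>])
  moreover have "LU_equiv n n (schmidt_diag n (\<lambda>k. p (\<sigma> k))) N"
    by (rule has_sq_schmidt_LU_equiv_diag[OF N])
  ultimately show ?thesis
    using LU_equiv_trans has_sq_schmidt_carrier[OF M] mat_diag_dim by meson
qed

lemma LU_equiv_sq_schmidt_coeff:
  assumes M: "has_sq_schmidt n M p" and N: "has_sq_schmidt n N q"
    and p: "\<forall>i<n. 0 \<le> p i" and q: "\<forall>i<n. 0 \<le> q i"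
    and "LU_equiv n n M N" and i: "i < n"
  shows "\<exists>k<n. q k = p i"
proof -
  have "LU_equiv n n (schmidt_diag n p) N"
    using LU_equiv_trans[OF mat_diag_dim has_sq_schmidt_LU_equiv_diag[OF M] assms(5)] .
  then have "LU_equiv n n (schmidt_diag n p) (schmidt_diag n q)"
    using LU_equiv_trans[OF mat_diag_dim _ LU_equiv_sym[OF mat_diag_dim has_sq_schmidt_LU_equiv_diag[OF N]]]
    by blast
  then obtain X where "unitary_mat n X"
    and "mat_diag n (\<lambda>i. complex_of_real (q i)) = X * mat_diag n (\<lambda>i. complex_of_real (p i)) * adj_mat X"
    using LU_equiv_gram[OF mat_diag_dim] schmidt_diag_gram[OF p] schmidt_diag_gram[OF q] by metis
  then obtain k where "k < n" "complex_of_real (q k) = complex_of_real (p i)"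
    using unitary_similar_diag_entry i by blast
  then show ?thesis
    by auto
qed

lemma normalized_mult:
  "normalized m s (k div n) * normalized n t (k mod n) = normalized (m * n) (\<lambda>k. s (k div n) * t (k mod n)) k"
  unfolding normalized_def by (simp add: sum_lessThan_mult_div_mod[of "\<lambda>i j. s i * t j"] sum_product)

lemma normalized_reindex:
  assumes "bij_betw \<sigma> {..<n} {..<n}"
  shows "normalized n (\<lambda>k. t (\<sigma> k)) k = normalized n t (\<sigma> k)"
  unfolding normalized_def using sum.reindex_bij_betw[OF assms, of t] by simp

lemma normalized_nonneg: "(\<And>i. 0 \<le> t i) \<Longrightarrow> 0 \<le> normalized n t k"
  unfolding normalized_def by (simp add: sum_nonneg)

lemma normalized_geometric_less:
  fixes a :: real
  assumes a: "0 < a" "a < 1" and "2 \<le> m" "2 \<le> n"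
  shows "normalized n (\<lambda>i. a ^ i) k < normalized n (\<lambda>i. a ^ (i * m)) 0"
proof -
  have "(\<Sum>i<n. a ^ (i * m)) < (\<Sum>i<n. a ^ i)"
  proof (rule sum_strict_mono_ex1)
    show "\<forall>i\<in>{..<n}. a ^ (i * m) \<le> a ^ i"
      using a \<open>2 \<le> m\<close> by (auto intro!: power_decreasing)
    show "\<exists>i\<in>{..<n}. a ^ (i * m) < a ^ i"
      using a \<open>2 \<le> m\<close> \<open>2 \<le> n\<close> power_strict_decreasing[of 1 m a] by (intro bexI[of _ 1]) auto
  qed simp
  moreover have "0 < (\<Sum>i<n. a ^ (i * m))"
    using a \<open>2 \<le> n\<close> by (intro sum_pos) (auto simp: lessThan_empty_iff)
  ultimately have "a ^ k / (\<Sum>i<n. a ^ i) < 1 / (\<Sum>i<n. a ^ (i * m))"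
    using a by (intro le_less_trans[OF divide_right_mono[OF power_le_one] frac_less2]) auto
  then show ?thesis
    by (simp add: normalized_def)
qed

theorem mainTheorem9:
  fixes dmu dla :: nat and a :: real
    and Mmu Mla Mmub Mlab :: "complex mat"
  assumes "dmu \<ge> 2" and "dla \<ge> 2" and "dmu < dla"
    and "0 < a" and "a < 1"
    and "has_sq_schmidt dmu Mmu (normalized dmu (\<lambda>i. a ^ (i * dla)))"
    and "has_sq_schmidt dla Mla (normalized dla (\<lambda>i. a ^ i))"
    and "has_sq_schmidt dmu Mmub (normalized dmu (\<lambda>i. a ^ i))"
    and "has_sq_schmidt dla Mlab (normalized dla (\<lambda>i. a ^ (i * dmu)))"
  shows "LU_equiv (dmu * dla) (dmu * dla) (kron_mat Mmu Mla) (kron_mat Mmub Mlab)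
         \<and> \<not> LU_equiv dmu dmu Mmu Mmub"
proof
  define \<sigma> where "\<sigma> k = k div dla + k mod dla * dmu" for k
  have \<sigma>: "bij_betw \<sigma> {..<dmu * dla} {..<dmu * dla}"
    unfolding \<sigma>_def by (rule bij_betw_swap_div_mod)
  have "has_sq_schmidt (dmu * dla) (kron_mat Mmu Mla) (normalized (dmu * dla) (\<lambda>k. a ^ k))"
    using has_sq_schmidt_kron[OF assms(6,7)] by (simp add: normalized_mult flip: power_add)
  moreover have "has_sq_schmidt (dmu * dla) (kron_mat Mmub Mlab)
      (\<lambda>k. normalized (dmu * dla) (\<lambda>k. a ^ k) (\<sigma> k))"
    using has_sq_schmidt_kron[OF assms(8,9)]
    by (simp add: normalized_mult \<sigma>_def normalized_reindex[OF \<sigma>, unfolded \<sigma>_def] flip: power_add)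
  ultimately show "LU_equiv (dmu * dla) (dmu * dla) (kron_mat Mmu Mla) (kron_mat Mmub Mlab)"
    using has_sq_schmidt_LU_equiv_perm \<sigma> by blast
  show "\<not> LU_equiv dmu dmu Mmu Mmub"
  proof
    assume LU: "LU_equiv dmu dmu Mmu Mmub"
    have "0 < dmu"
      using assms(1) by simp
    then obtain k where "k < dmu" "normalized dmu (\<lambda>i. a ^ i) k = normalized dmu (\<lambda>i. a ^ (i * dla)) 0"
      using LU_equiv_sq_schmidt_coeff[OF assms(6,8) _ _ LU] assms(4) by (auto simp: normalized_nonneg)
    then show False
      using normalized_geometric_less[OF assms(4,5,2,1)] by (metis less_irrefl)
  qed
qed

end
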